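(* Let $\hat\mu_i(\mathbf O_{i-1}):\mathbb X\times\mathbb A\to\mathbb R$, $i\in[n]$, be any estimates of $\mu^*$ such that $\hat\mu_i$ depends measurably only on $\mathbf O_{i-1}$. Define the AIPW scores $$\hat\Gamma_i(\mathbf O_i):=\frac{g(X_i,A_i)}{\pi_i^*(X_i,\mathbf O_{i-1};A_i)}\{Y_i-\hat\mu_i(\mathbf O_{i-1})(X_i,A_i)\}+\langle g(X_i,\cdot),\hat\mu_i(\mathbf O_{i-1})(X_i,\cdot)\rangle_{\lambda_{\mathbb A}}$$ and the AIPW estimator $\hat\tau_n^{\mathrm{AIPW}}(\mathbf O_n):=\frac1n\sum_{i=1}^n\hat\Gamma_i(\mathbf O_i)$. Then $$\mathbb E_{\mathcal I^*}\big[\{\hat\tau_n^{\mathrm{AIPW}}(\mathbf O_n)-\tau(\mathcal I^* )\}^2\big]\le\frac1n\Big\{v_*^2+\frac1n\sum_{i=1}^n\mathbb E_{\mathcal I^*}\Big[\frac{g^2(X_i,A_i)\{\hat\mu_i(\mathbf O_{i-1})(X_i,A_i)-\mu^*(X_i,A_i)\}^2}{(\pi_i^* )^2(X_i,\mathbf O_{i-1};A_i)}\Big]\Big\}.$$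
   Context: Setup. Let $(\mathbb X,\lambda_{\mathbb X})$, $(\mathbb A,\lambda_{\mathbb A})$, $(\mathbb Y,\lambda_{\mathbb Y})$ be measurable spaces with $\sigma$-finite measures, $\mathbb Y\subseteq\mathbb R$, and $\mathbb O:=\mathbb X\times\mathbb A\times\mathbb Y$. A problem instance is a pair $\mathcal I=(\Xi,\Gamma)$ where $\Xi$ is a probability measure on $\mathbb X$ and $\Gamma$ is a Markov kernel from $\mathbb X\times\mathbb A$ to $\mathbb Y$. For each $i\in[n]$ a known behavioral policy $\Pi_i^*$ is a Markov kernel from $\mathbb X\times\mathbb O^{i-1}$ to $\mathbb A$ with density $\pi_i^*(x,\mathbf o_{i-1};\cdot):=d\Pi_i^*(\cdot\mid x,\mathbf o_{i-1})/d\lambda_{\mathbb A}$. Under instance $\mathcal I$, data $\mathbf O_n=(X_1,A_1,Y_1,\dots,X_n,A_n,Y_n)$ are generated sequentially: for $i=1,\dots,n$, $X_i\sim\Xi$ independently of $\mathbf O_{i-1}$; $A_i\mid(X_i,\mathbf O_{i-1})\sim\Pi_i^*(\cdot\mid X_i,\mathbf O_{i-1})$; $Y_i\mid(X_i,A_i,\mathbf O_{i-1})\sim\Gamma(\cdot\mid X_i,A_i)$. Here $\mathbf O_i$ denotes the first $i$ triples ($\mathbf O_0=\varnothing$) and $\mathcal H_i:=\sigma(\mathbf O_i)$. $\mathbb E_{\mathcal I}$, $\mathrm{Var}_{\mathcal I}$ denote expectation/variance under this law. The true instance is $\mathcal I^*=(\Xi^*,\Gamma^* )$, with treatment effect $\mu^*(x,a):=\int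 y\,\Gamma^*(dy\mid x,a)$ and conditional variance $\sigma^2(x,a):=\int(y-\mu^*(x,a))^2\Gamma^*(dy\mid x,a)<\infty$. A measurable evaluation function $g:\mathbb X\times\mathbb A\to\mathbb R$ is given; $\langle f,h\rangle_{\lambda_{\mathbb A}}:=\int_{\mathbb A}f(a)h(a)\,d\lambda_{\mathbb A}(a)$. The target is $\tau(\mathcal I^* ):=\mathbb E_{X\sim\Xi^*}[\langle g(X,\cdot),\mu^*(X,\cdot)\rangle_{\lambda_{\mathbb A}}]$. For $\varphi:\mathbb X\times\mathbb A\to\mathbb R$ and $k\in[n]$, $\|\varphi\|_{(k)}^2:=\frac1k\sum_{i=1}^k\mathbb E_{\mathcal I^*}\big[g^2(X_i,A_i)\varphi^2(X_i,A_i)/(\pi_i^* )^2(X_i,\mathbf O_{i-1};A_i)\big]$. The efficient variance is $v_*^2:=\mathrm{Var}_{X\sim\Xi^*}[\langle g(X,\cdot),\mu^*(X,\cdot)\rangle_{\lambda_{\mathbb A}}]+\|\sigma\|_{(n)}^2$. All expectations appearing are assumed finite. *)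

theory Defs
  imports "HOL-Probability.Probability"
begin

text \<open>Histories of the
first i observations are restricted functions on {..<i} (0-based indexing:
the paper's O_{i-1} for i in [n] is our hist i for i in {..<n}).\<close>

definition obsM :: "'x measure \<Rightarrow> 'a measure \<Rightarrow> ('x \<times> 'a \<times> real) measure" where
  "obsM LX LA = LX \<Otimes>\<^sub>M LA \<Otimes>\<^sub>M (borel :: real measure)"

definition histM :: "'x measure \<Rightarrow> 'a measure \<Rightarrow> nat \<Rightarrow> (nat \<Rightarrow> 'x \<times> 'a \<times> real) measure" where
  "histM LX LA i = PiM {..<i} (\<lambda>_. obsM LX LA)"

definition hist :: "(nat \<Rightarrow> 'w \<Rightarrow> 'x) \<Rightarrow> (nat \<Rightarrow> 'w \<Rightarrow> 'a) \<Rightarrow> (nat \<Rightarrow> 'w \<Rightarrow> real)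
    \<Rightarrow> nat \<Rightarrow> 'w \<Rightarrow> (nat \<Rightarrow> 'x \<times> 'a \<times> real)" where
  "hist X A Y i \<omega> = (\<lambda>j\<in>{..<i}. (X j \<omega>, A j \<omega>, Y j \<omega>))"

definition mu_star :: "('x \<Rightarrow> 'a \<Rightarrow> real measure) \<Rightarrow> 'x \<Rightarrow> 'a \<Rightarrow> real" where
  "mu_star Gam x a = (\<integral>y. y \<partial>(Gam x a))"

definition sigma2 :: "('x \<Rightarrow> 'a \<Rightarrow> real measure) \<Rightarrow> 'x \<Rightarrow> 'a \<Rightarrow> real" where
  "sigma2 Gam x a = (\<integral>y. (y - mu_star Gam x a)\<^sup>2 \<partial>(Gam x a))"

definition inner_A :: "'a measure \<Rightarrow> ('a \<Rightarrow> real) \<Rightarrow> ('a \<Rightarrow> real) \<Rightarrow> real" where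
  "inner_A LA f h = (\<integral>a. f a * h a \<partial>LA)"

definition tau :: "'x measure \<Rightarrow> 'a measure \<Rightarrow> ('x \<Rightarrow> 'a \<Rightarrow> real measure)
    \<Rightarrow> ('x \<Rightarrow> 'a \<Rightarrow> real) \<Rightarrow> real" where
  "tau Xi LA Gam g = (\<integral>x. inner_A LA (g x) (mu_star Gam x) \<partial>Xi)"

definition aipw_score ::
  "'a measure \<Rightarrow> ('x \<Rightarrow> 'a \<Rightarrow> real)
   \<Rightarrow> (nat \<Rightarrow> 'x \<Rightarrow> (nat \<Rightarrow> 'x \<times> 'a \<times> real) \<Rightarrow> 'a \<Rightarrow> real)
   \<Rightarrow> (nat \<Rightarrow> (nat \<Rightarrow> 'x \<times> 'a \<times> real) \<Rightarrow> 'x \<Rightarrow> 'a \<Rightarrow> real)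
   \<Rightarrow> (nat \<Rightarrow> 'w \<Rightarrow> 'x) \<Rightarrow> (nat \<Rightarrow> 'w \<Rightarrow> 'a) \<Rightarrow> (nat \<Rightarrow> 'w \<Rightarrow> real)
   \<Rightarrow> nat \<Rightarrow> 'w \<Rightarrow> real" where
  "aipw_score LA g pol muhat X A Y i \<omega> =
     g (X i \<omega>) (A i \<omega>) / pol i (X i \<omega>) (hist X A Y i \<omega>) (A i \<omega>)
       * (Y i \<omega> - muhat i (hist X A Y i \<omega>) (X i \<omega>) (A i \<omega>))
     + inner_A LA (g (X i \<omega>)) (muhat i (hist X A Y i \<omega>) (X i \<omega>))"

definition tau_aipw ::
  "'a measure \<Rightarrow> ('x \<Rightarrow> 'a \<Rightarrow> real)
   \<Rightarrow> (nat \<Rightarrow> 'x \<Rightarrow> (nat \<Rightarrow> 'x \<times> 'a \<times> real) \<Rightarrow> 'a \<Rightarrow> real)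
   \<Rightarrow> (nat \<Rightarrow> (nat \<Rightarrow> 'x \<times> 'a \<times> real) \<Rightarrow> 'x \<Rightarrow> 'a \<Rightarrow> real)
   \<Rightarrow> (nat \<Rightarrow> 'w \<Rightarrow> 'x) \<Rightarrow> (nat \<Rightarrow> 'w \<Rightarrow> 'a) \<Rightarrow> (nat \<Rightarrow> 'w \<Rightarrow> real)
   \<Rightarrow> nat \<Rightarrow> 'w \<Rightarrow> real" where
  "tau_aipw LA g pol muhat X A Y n \<omega> =
     (1 / real n) * (\<Sum>i<n. aipw_score LA g pol muhat X A Y i \<omega>)"

definition norm_k_sq ::
  "'w measure \<Rightarrow> ('x \<Rightarrow> 'a \<Rightarrow> real)
   \<Rightarrow> (nat \<Rightarrow> 'x \<Rightarrow> (nat \<Rightarrow> 'x \<times> 'a \<times> real) \<Rightarrow> 'a \<Rightarrow> real)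
   \<Rightarrow> (nat \<Rightarrow> 'w \<Rightarrow> 'x) \<Rightarrow> (nat \<Rightarrow> 'w \<Rightarrow> 'a) \<Rightarrow> (nat \<Rightarrow> 'w \<Rightarrow> real)
   \<Rightarrow> ('x \<Rightarrow> 'a \<Rightarrow> real) \<Rightarrow> nat \<Rightarrow> real" where
  "norm_k_sq M g pol X A Y \<phi> k =
     (1 / real k) * (\<Sum>i<k. \<integral>\<omega>. (g (X i \<omega>) (A i \<omega>))\<^sup>2 * (\<phi> (X i \<omega>) (A i \<omega>))\<^sup>2
         / (pol i (X i \<omega>) (hist X A Y i \<omega>) (A i \<omega>))\<^sup>2 \<partial>M)"

definition v_star_sq ::
  "'w measure \<Rightarrow> 'x measure \<Rightarrow> 'a measure \<Rightarrow> ('x \<Rightarrow> 'a \<Rightarrow> real measure)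
   \<Rightarrow> ('x \<Rightarrow> 'a \<Rightarrow> real)
   \<Rightarrow> (nat \<Rightarrow> 'x \<Rightarrow> (nat \<Rightarrow> 'x \<times> 'a \<times> real) \<Rightarrow> 'a \<Rightarrow> real)
   \<Rightarrow> (nat \<Rightarrow> 'w \<Rightarrow> 'x) \<Rightarrow> (nat \<Rightarrow> 'w \<Rightarrow> 'a) \<Rightarrow> (nat \<Rightarrow> 'w \<Rightarrow> real)
   \<Rightarrow> nat \<Rightarrow> real" where
  "v_star_sq M Xi LA Gam g pol X A Y n =
     prob_space.variance Xi (\<lambda>x. inner_A LA (g x) (mu_star Gam x))
     + norm_k_sq M g pol X A Y (\<lambda>x a. sqrt (sigma2 Gam x a)) n"

end

theory Submission
  imports Defs
begin

text \<open>Write the centred score \<open>\<Gamma>\<^sub>i - \<tau>\<close> as \<open>U\<^sub>i + V\<^sub>i + W\<^sub>i\<close>: the weighted outcome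
  noise \<open>U\<^sub>i = (g/\<pi>\<^sub>i)(Y\<^sub>i - \<mu>\<^sup>*)\<close>, the estimation error
  \<open>V\<^sub>i = (g/\<pi>\<^sub>i)(\<mu>\<^sup>* - \<mu>\<^sub>i) + \<langle>g, \<mu>\<^sub>i - \<mu>\<^sup>*\<rangle>\<close> and the context deviation
  \<open>W\<^sub>i = \<langle>g, \<mu>\<^sup>*\<rangle>(X\<^sub>i) - \<tau>\<close>. Given the past, \<open>U\<^sub>i\<close> is centred given \<open>(X\<^sub>i, A\<^sub>i)\<close>,
  \<open>V\<^sub>i\<close> is centred given \<open>X\<^sub>i\<close> because integrating the importance weight against \<open>\<pi>\<^sub>i\<close>
  cancels it, and \<open>W\<^sub>i\<close> is centred. Hence the three parts are orthogonal, and the scores of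
  different rounds form a martingale difference sequence, so the mean squared error is
  \<open>(1/n\<^sup>2) \<Sum> E (U\<^sub>i\<^sup>2 + V\<^sub>i\<^sup>2 + W\<^sub>i\<^sup>2)\<close>. Finally \<open>E U\<^sub>i\<^sup>2\<close> and \<open>E W\<^sub>i\<^sup>2\<close> give the efficient
  variance, and \<open>E V\<^sub>i\<^sup>2 = E a\<^sub>i\<^sup>2 - E b\<^sub>i\<^sup>2 \<le> E a\<^sub>i\<^sup>2\<close> for the weighted part \<open>a\<^sub>i\<close> and the plug-in
  part \<open>b\<^sub>i\<close> of \<open>V\<^sub>i\<close>, since \<open>b\<^sub>i\<close> is minus the conditional mean of \<open>a\<^sub>i\<close>.\<close>

lemma integral_eq_0_iff_nn_integral_parts_eq:
  fixes f :: "'z \<Rightarrow> real"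
  assumes f: "integrable M f"
  shows "integral\<^sup>L M f = 0 \<longleftrightarrow> (\<integral>\<^sup>+x. ennreal (f x) \<partial>M) = (\<integral>\<^sup>+x. ennreal (- f x) \<partial>M)"
proof -
  obtain p where p: "(\<integral>\<^sup>+x. ennreal (f x) \<partial>M) = ennreal p" "0 \<le> p"
    using f by (cases "\<integral>\<^sup>+x. ennreal (f x) \<partial>M" rule: ennreal_cases) (auto simp: real_integrable_def)
  obtain q where q: "(\<integral>\<^sup>+x. ennreal (- f x) \<partial>M) = ennreal q" "0 \<le> q"
    using f by (cases "\<integral>\<^sup>+x. ennreal (- f x) \<partial>M" rule: ennreal_cases) (auto simp: real_integrable_def)
  show ?thesis
    using real_lebesgue_integral_def[OF f] p q by simp
qed

lemma integrable_mult_of_square_integrable: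
  fixes f g :: "'z \<Rightarrow> real"
  assumes [measurable]: "f \<in> borel_measurable M" "g \<in> borel_measurable M"
    and "integrable M (\<lambda>x. (f x)\<^sup>2)" "integrable M (\<lambda>x. (g x)\<^sup>2)"
  shows "integrable M (\<lambda>x. f x * g x)"
proof (rule Bochner_Integration.integrable_bound)
  show "integrable M (\<lambda>x. (f x)\<^sup>2 + (g x)\<^sup>2)" using assms by simp
  show "AE x in M. norm (f x * g x) \<le> norm ((f x)\<^sup>2 + (g x)\<^sup>2)"
  proof (intro AE_I2)
    fix x
    have "2 * (\<bar>f x\<bar> * \<bar>g x\<bar>) \<le> (f x)\<^sup>2 + (g x)\<^sup>2"
      using sum_squares_bound[of "\<bar>f x\<bar>" "\<bar>g x\<bar>"] by (simp add: mult.assoc)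
    moreover have "0 \<le> \<bar>f x\<bar> * \<bar>g x\<bar>"
      by simp
    ultimately have "\<bar>f x\<bar> * \<bar>g x\<bar> \<le> (f x)\<^sup>2 + (g x)\<^sup>2"
      by linarith
    then show "norm (f x * g x) \<le> norm ((f x)\<^sup>2 + (g x)\<^sup>2)"
      by (simp add: abs_mult)
  qed
qed measurable

lemma integrable_square_add:
  fixes f g :: "'z \<Rightarrow> real"
  assumes "f \<in> borel_measurable M" "g \<in> borel_measurable M"
    and "integrable M (\<lambda>x. (f x)\<^sup>2)" "integrable M (\<lambda>x. (g x)\<^sup>2)"
  shows "integrable M (\<lambda>x. (f x + g x)\<^sup>2)"
  using assms integrable_mult_of_square_integrable[OF assms]
  by (simp add: power2_sum mult.assoc)

lemma integral_square_sum_orthogonal: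
  fixes D :: "'i \<Rightarrow> 'z \<Rightarrow> real"
  assumes "finite I"
    and meas: "\<And>i. i \<in> I \<Longrightarrow> D i \<in> borel_measurable M"
    and sq: "\<And>i. i \<in> I \<Longrightarrow> integrable M (\<lambda>x. (D i x)\<^sup>2)"
    and orth: "\<And>i j. i \<in> I \<Longrightarrow> j \<in> I \<Longrightarrow> i \<noteq> j \<Longrightarrow> (\<integral>x. D i x * D j x \<partial>M) = 0"
  shows "(\<integral>x. (\<Sum>i\<in>I. D i x)\<^sup>2 \<partial>M) = (\<Sum>i\<in>I. \<integral>x. (D i x)\<^sup>2 \<partial>M)"
proof -
  have prod: "integrable M (\<lambda>x. D i x * D j x)" if "i \<in> I" "j \<in> I" for i j
    using that by (intro integrable_mult_of_square_integrable meas sq)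
  have "(\<integral>x. (\<Sum>i\<in>I. D i x)\<^sup>2 \<partial>M) = (\<integral>x. (\<Sum>i\<in>I. \<Sum>j\<in>I. D i x * D j x) \<partial>M)"
    by (simp add: power2_eq_square sum_product)
  also have "\<dots> = (\<Sum>i\<in>I. \<Sum>j\<in>I. \<integral>x. D i x * D j x \<partial>M)"
    using prod by (simp add: Bochner_Integration.integrable_sum)
  also have "\<dots> = (\<Sum>i\<in>I. \<integral>x. (D i x)\<^sup>2 \<partial>M)"
  proof (rule sum.cong[OF refl])
    fix i assume i: "i \<in> I"
    have "(\<Sum>j\<in>I. \<integral>x. D i x * D j x \<partial>M) = (\<Sum>j\<in>I. if j = i then \<integral>x. (D i x)\<^sup>2 \<partial>M else 0)"
      using orth[OF i] by (intro sum.cong) (auto simp: power2_eq_square)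
    then show "(\<Sum>j\<in>I. \<integral>x. D i x * D j x \<partial>M) = (\<integral>x. (D i x)\<^sup>2 \<partial>M)"
      using i \<open>finite I\<close> by simp
  qed
  finally show ?thesis .
qed

lemma square_integral_density_le:
  fixes p q :: "'z \<Rightarrow> real"
  assumes [measurable]: "p \<in> borel_measurable M" "q \<in> borel_measurable M"
    and p_nonneg: "\<And>x. x \<in> space M \<Longrightarrow> 0 \<le> p x"
    and p_norm: "(\<integral>\<^sup>+x. ennreal (p x) \<partial>M) = 1"
  shows "ennreal ((\<integral>x. p x * q x \<partial>M)\<^sup>2) \<le> (\<integral>\<^sup>+x. ennreal (p x) * ennreal ((q x)\<^sup>2) \<partial>M)"
proof -
  let ?P = "density M (\<lambda>x. ennreal (p x))"
  have rhs: "(\<integral>\<^sup>+x. ennreal (p x) * ennreal ((q x)\<^sup>2) \<partial>M) = (\<integral>\<^sup>+x. ennreal ((q x)\<^sup>2) \<partial>?P)"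
    by (simp add: nn_integral_density)
  show ?thesis
  proof (cases "(\<integral>\<^sup>+x. ennreal (p x) * ennreal ((q x)\<^sup>2) \<partial>M) = \<infinity>")
    case False
    interpret P: prob_space ?P
      by standard (use p_norm in \<open>simp add: emeasure_density\<close>)
    have q2: "integrable ?P (\<lambda>x. (q x)\<^sup>2)"
      by (rule integrableI_nonneg) (use False rhs in \<open>auto simp: less_top\<close>)
    have q1: "integrable ?P q"
      by (rule P.square_integrable_imp_integrable) (use q2 in auto)
    have "(P.expectation q)\<^sup>2 \<le> P.expectation (\<lambda>x. (q x)\<^sup>2)"
      using P.variance_positive[of q] P.variance_eq[OF q1 q2] by simp
    moreover have "P.expectation q = (\<integral>x. p x * q x \<partial>M)"
      using p_nonneg by (simp add: integral_density AE_I2)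
    moreover have "ennreal (P.expectation (\<lambda>x. (q x)\<^sup>2)) = (\<integral>\<^sup>+x. ennreal ((q x)\<^sup>2) \<partial>?P)"
      by (rule nn_integral_eq_integral[symmetric, OF q2]) simp
    ultimately show ?thesis
      using rhs by (metis ennreal_leI)
  qed simp
qed

text \<open>The hypotheses of the theorem, except that \<open>LX\<close> need not be \<open>\<sigma>\<close>-finite.\<close>

locale adaptive_aipw =
  fixes M :: "'w measure"
    and LX :: "'x measure" and LA :: "'a measure"
    and Xi :: "'x measure" and Gam :: "'x \<Rightarrow> 'a \<Rightarrow> real measure"
    and g :: "'x \<Rightarrow> 'a \<Rightarrow> real"
    and pol :: "nat \<Rightarrow> 'x \<Rightarrow> (nat \<Rightarrow> 'x \<times> 'a \<times> real) \<Rightarrow> 'a \<Rightarrow> real"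
    and muhat :: "nat \<Rightarrow> (nat \<Rightarrow> 'x \<times> 'a \<times> real) \<Rightarrow> 'x \<Rightarrow> 'a \<Rightarrow> real"
    and X :: "nat \<Rightarrow> 'w \<Rightarrow> 'x" and A :: "nat \<Rightarrow> 'w \<Rightarrow> 'a" and Y :: "nat \<Rightarrow> 'w \<Rightarrow> real"
    and n :: nat
  assumes n_pos: "0 < n"
    and sf_A: "sigma_finite_measure LA"
    and Xi_prob: "prob_space Xi" and Xi_sets: "sets Xi = sets LX"
    and Gam_kernel: "(\<lambda>(x, a). Gam x a) \<in> measurable (LX \<Otimes>\<^sub>M LA) (subprob_algebra borel)"
    and Gam_prob: "\<And>x a. x \<in> space LX \<Longrightarrow> a \<in> space LA \<Longrightarrow> prob_space (Gam x a)"
    and Gam_sq: "\<And>x a. x \<in> space LX \<Longrightarrow> a \<in> space LA \<Longrightarrow> integrable (Gam x a) (\<lambda>y. y\<^sup>2)"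
    and g_meas: "(\<lambda>(x, a). g x a) \<in> borel_measurable (LX \<Otimes>\<^sub>M LA)"
    and pol_meas: "\<And>i. i < n \<Longrightarrow>
        (\<lambda>(x, h, a). pol i x h a) \<in> borel_measurable (LX \<Otimes>\<^sub>M histM LX LA i \<Otimes>\<^sub>M LA)"
    and pol_pos: "\<And>i x h a. i < n \<Longrightarrow> x \<in> space LX \<Longrightarrow> h \<in> space (histM LX LA i)
        \<Longrightarrow> a \<in> space LA \<Longrightarrow> 0 < pol i x h a"
    and pol_norm: "\<And>i x h. i < n \<Longrightarrow> x \<in> space LX \<Longrightarrow> h \<in> space (histM LX LA i)
        \<Longrightarrow> (\<integral>\<^sup>+ a. ennreal (pol i x h a) \<partial>LA) = 1"
    and muhat_meas: "\<And>i. i < n \<Longrightarrow>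
        (\<lambda>(h, x, a). muhat i h x a) \<in> borel_measurable (histM LX LA i \<Otimes>\<^sub>M LX \<Otimes>\<^sub>M LA)"
    and M_prob: "prob_space M"
    and X_meas: "\<And>i. i < n \<Longrightarrow> X i \<in> measurable M LX"
    and A_meas: "\<And>i. i < n \<Longrightarrow> A i \<in> measurable M LA"
    and Y_meas: "\<And>i. i < n \<Longrightarrow> Y i \<in> borel_measurable M"
    and law_XA: "\<And>i. i < n \<Longrightarrow>
        distr M (histM LX LA i \<Otimes>\<^sub>M LX \<Otimes>\<^sub>M LA) (\<lambda>\<omega>. (hist X A Y i \<omega>, X i \<omega>, A i \<omega>))
        = density (distr M (histM LX LA i) (hist X A Y i) \<Otimes>\<^sub>M Xi \<Otimes>\<^sub>M LA)
                  (\<lambda>(h, x, a). ennreal (pol i x h a))"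
    and law_Y: "\<And>i. i < n \<Longrightarrow>
        distr M (histM LX LA i \<Otimes>\<^sub>M LX \<Otimes>\<^sub>M LA \<Otimes>\<^sub>M borel)
              (\<lambda>\<omega>. (hist X A Y i \<omega>, X i \<omega>, A i \<omega>, Y i \<omega>))
        = distr M (histM LX LA i \<Otimes>\<^sub>M LX \<Otimes>\<^sub>M LA) (\<lambda>\<omega>. (hist X A Y i \<omega>, X i \<omega>, A i \<omega>))
          \<bind> (\<lambda>(h, x, a). distr (Gam x a) (histM LX LA i \<Otimes>\<^sub>M LX \<Otimes>\<^sub>M LA \<Otimes>\<^sub>M borel)
                                   (\<lambda>y. (h, x, a, y)))"
    and int_gmu: "\<And>x. x \<in> space LX \<Longrightarrow> integrable LA (\<lambda>a. g x a * mu_star Gam x a)"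
    and int_gmuhat: "\<And>i h x. i < n \<Longrightarrow> h \<in> space (histM LX LA i) \<Longrightarrow> x \<in> space LX
        \<Longrightarrow> integrable LA (\<lambda>a. g x a * muhat i h x a)"
    and int_tau: "integrable Xi (\<lambda>x. inner_A LA (g x) (mu_star Gam x))"
    and int_var: "integrable Xi (\<lambda>x. (inner_A LA (g x) (mu_star Gam x))\<^sup>2)"
    and int_sigma: "\<And>i. i < n \<Longrightarrow> integrable M (\<lambda>\<omega>.
        (g (X i \<omega>) (A i \<omega>))\<^sup>2 * (sqrt (sigma2 Gam (X i \<omega>) (A i \<omega>)))\<^sup>2
          / (pol i (X i \<omega>) (hist X A Y i \<omega>) (A i \<omega>))\<^sup>2)"
    and int_err: "\<And>i. i < n \<Longrightarrow> integrable M (\<lambda>\<omega>.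
        (g (X i \<omega>) (A i \<omega>))\<^sup>2
          * (muhat i (hist X A Y i \<omega>) (X i \<omega>) (A i \<omega>) - mu_star Gam (X i \<omega>) (A i \<omega>))\<^sup>2
          / (pol i (X i \<omega>) (hist X A Y i \<omega>) (A i \<omega>))\<^sup>2)"
begin

abbreviation hist_law :: "nat \<Rightarrow> (nat \<Rightarrow> 'x \<times> 'a \<times> real) measure" where
  "hist_law i \<equiv> distr M (histM LX LA i) (hist X A Y i)"

abbreviation hxa_space :: "nat \<Rightarrow> ((nat \<Rightarrow> 'x \<times> 'a \<times> real) \<times> 'x \<times> 'a) measure" where
  "hxa_space i \<equiv> histM LX LA i \<Otimes>\<^sub>M LX \<Otimes>\<^sub>M LA"

abbreviation hxay_space :: "nat \<Rightarrow> ((nat \<Rightarrow> 'x \<times> 'a \<times> real) \<times> 'x \<times> 'a \<times> real) measure" where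
  "hxay_space i \<equiv> histM LX LA i \<Otimes>\<^sub>M LX \<Otimes>\<^sub>M LA \<Otimes>\<^sub>M borel"

lemma space_Xi: "space Xi = space LX"
  by (rule sets_eq_imp_space_eq[OF Xi_sets])

lemma measurable_hist: "i \<le> n \<Longrightarrow> hist X A Y i \<in> measurable M (histM LX LA i)"
  unfolding hist_def histM_def obsM_def
  by (intro measurable_restrict measurable_Pair) (auto intro: X_meas A_meas Y_meas)

lemma hist_law_prob: "i \<le> n \<Longrightarrow> prob_space (hist_law i)"
  by (intro prob_space.prob_space_distr M_prob measurable_hist)

lemma sample_in_space:
  assumes "i < n" and "w \<in> space M"
  shows "hist X A Y i w \<in> space (histM LX LA i)" "X i w \<in> space LX" "A i w \<in> space LA"
  using measurable_space[OF measurable_hist assms(2)] measurable_space[OF X_meas assms(2)]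
    measurable_space[OF A_meas assms(2)] assms(1) by auto

lemmas [measurable] = X_meas A_meas Y_meas measurable_hist g_meas

lemma measurable_pol_comp[measurable]:
  assumes "i < n" and [measurable]: "h \<in> measurable N (histM LX LA i)" "x \<in> measurable N LX"
    "a \<in> measurable N LA"
  shows "(\<lambda>w. pol i (x w) (h w) (a w)) \<in> borel_measurable N"
  using measurable_comp[of "\<lambda>w. (x w, h w, a w)", OF _ pol_meas[OF assms(1)]] by (simp add: o_def)

lemma measurable_muhat_comp[measurable]:
  assumes "i < n" and [measurable]: "h \<in> measurable N (histM LX LA i)" "x \<in> measurable N LX"
    "a \<in> measurable N LA"
  shows "(\<lambda>w. muhat i (h w) (x w) (a w)) \<in> borel_measurable N"
  using measurable_comp[of "\<lambda>w. (h w, x w, a w)", OF _ muhat_meas[OF assms(1)]] by (simp add: o_def)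

lemma measurable_mu_star[measurable]: "(\<lambda>(x, a). mu_star Gam x a) \<in> borel_measurable (LX \<Otimes>\<^sub>M LA)"
  using measurable_comp[OF Gam_kernel, of "\<lambda>N. \<integral>y. y \<partial>N"]
  by (simp add: o_def case_prod_beta mu_star_def)

lemma measurable_inner_mu_star[measurable]:
  "(\<lambda>x. inner_A LA (g x) (mu_star Gam x)) \<in> borel_measurable LX"
  unfolding inner_A_def
  by (rule sigma_finite_measure.borel_measurable_lebesgue_integral[OF sf_A]) measurable

lemma measurable_inner_muhat_comp[measurable]:
  assumes "i < n" and [measurable]: "h \<in> measurable N (histM LX LA i)" "x \<in> measurable N LX"
  shows "(\<lambda>w. inner_A LA (g (x w)) (muhat i (h w) (x w))) \<in> borel_measurable N"
proof -
  have "(\<lambda>(h, x). inner_A LA (g x) (muhat i h x)) \<in> borel_measurable (histM LX LA i \<Otimes>\<^sub>M LX)"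
    unfolding inner_A_def case_prod_beta
    by (rule sigma_finite_measure.borel_measurable_lebesgue_integral[OF sf_A]) (use assms in measurable)
  from measurable_comp[of "\<lambda>w. (h w, x w)", OF _ this] show ?thesis
    by (simp add: o_def)
qed

lemma nn_integral_hist_context_action:
  assumes i: "i < n" and F[measurable]: "F \<in> borel_measurable (hxa_space i)"
  shows "(\<integral>\<^sup>+\<omega>. F (hist X A Y i \<omega>, X i \<omega>, A i \<omega>) \<partial>M)
    = (\<integral>\<^sup>+h. \<integral>\<^sup>+x. \<integral>\<^sup>+a. ennreal (pol i x h a) * F (h, x, a) \<partial>LA \<partial>Xi \<partial>hist_law i)"
proof -
  let ?B = "hist_law i \<Otimes>\<^sub>M Xi \<Otimes>\<^sub>M LA"
  let ?p = "\<lambda>(h, x, a). ennreal (pol i x h a)"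
  have sets_B: "sets ?B = sets (hxa_space i)"
    by (intro sets_pair_measure_cong) (auto simp: Xi_sets)
  have pF: "(\<lambda>q. ?p q * F q) \<in> borel_measurable ?B"
    unfolding measurable_cong_sets[OF sets_B refl] using i by measurable
  have "(\<integral>\<^sup>+\<omega>. F (hist X A Y i \<omega>, X i \<omega>, A i \<omega>) \<partial>M)
      = (\<integral>\<^sup>+q. F q \<partial>distr M (hxa_space i) (\<lambda>\<omega>. (hist X A Y i \<omega>, X i \<omega>, A i \<omega>)))"
    using i by (simp add: nn_integral_distr)
  also have "\<dots> = (\<integral>\<^sup>+q. ?p q * F q \<partial>?B)"
    unfolding law_XA[OF i] using i
    by (subst nn_integral_density) (auto simp: measurable_cong_sets[OF sets_B refl])
  also have "\<dots> = (\<integral>\<^sup>+h. \<integral>\<^sup>+q. ?p (h, q) * F (h, q) \<partial>(Xi \<Otimes>\<^sub>M LA) \<partial>hist_law i)"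
    using pF by (rule sigma_finite_measure.nn_integral_fst[symmetric,
        OF sigma_finite_pair_measure[OF prob_space_imp_sigma_finite[OF Xi_prob] sf_A]])
  also have "\<dots> = (\<integral>\<^sup>+h. \<integral>\<^sup>+x. \<integral>\<^sup>+a. ennreal (pol i x h a) * F (h, x, a) \<partial>LA \<partial>Xi \<partial>hist_law i)"
  proof (intro nn_integral_cong)
    fix h assume "h \<in> space (hist_law i)"
    then have "(\<lambda>q. ?p (h, q) * F (h, q)) \<in> borel_measurable (Xi \<Otimes>\<^sub>M LA)"
      using pF by (intro measurable_compose_Pair1[of _ "hist_law i"]) auto
    then show "(\<integral>\<^sup>+q. ?p (h, q) * F (h, q) \<partial>(Xi \<Otimes>\<^sub>M LA))
        = (\<integral>\<^sup>+x. \<integral>\<^sup>+a. ennreal (pol i x h a) * F (h, x, a) \<partial>LA \<partial>Xi)"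
      by (subst sigma_finite_measure.nn_integral_fst[OF sf_A, symmetric]) (auto simp: case_prod_beta)
  qed
  finally show ?thesis .
qed

lemma sets_Gam: "x \<in> space LX \<Longrightarrow> a \<in> space LA \<Longrightarrow> sets (Gam x a) = sets borel"
  using measurable_space[OF Gam_kernel, of "(x, a)"]
  by (simp add: space_pair_measure space_subprob_algebra)

lemma measurable_Gam_snd:
  "(\<lambda>q. Gam (fst (snd q)) (snd (snd q))) \<in> measurable (H \<Otimes>\<^sub>M LX \<Otimes>\<^sub>M LA) (subprob_algebra borel)"
  using measurable_comp[OF measurable_snd Gam_kernel] by (simp add: o_def case_prod_beta)

lemma nn_integral_outcome:
  assumes i: "i < n" and F[measurable]: "F \<in> borel_measurable (hxay_space i)"
  shows "(\<integral>\<^sup>+\<omega>. F (hist X A Y i \<omega>, X i \<omega>, A i \<omega>, Y i \<omega>) \<partial>M)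
    = (\<integral>\<^sup>+\<omega>. (\<integral>\<^sup>+y. F (hist X A Y i \<omega>, X i \<omega>, A i \<omega>, y) \<partial>Gam (X i \<omega>) (A i \<omega>)) \<partial>M)"
proof -
  let ?D = "distr M (hxa_space i) (\<lambda>\<omega>. (hist X A Y i \<omega>, X i \<omega>, A i \<omega>))"
  let ?K = "\<lambda>(h, x, a). distr (Gam x a) (hxay_space i) (\<lambda>y. (h, x, a, y))"
  let ?G = "\<lambda>(h, x, a). \<integral>\<^sup>+y. F (h, x, a, y) \<partial>Gam x a"
  have "(\<lambda>q. distr (Gam (fst (snd q)) (snd (snd q))) (hxay_space i) (\<lambda>y. (fst q, fst (snd q), snd (snd q), y)))
      \<in> measurable (hxa_space i) (subprob_algebra (hxay_space i))"
    by (rule measurable_distr2[OF _ measurable_Gam_snd]) measurable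
  then have K: "?K \<in> measurable ?D (subprob_algebra (hxay_space i))"
    by (simp add: case_prod_beta cong: measurable_cong_sets)
  have "(\<lambda>q. \<integral>\<^sup>+y. F (fst q, fst (snd q), snd (snd q), y) \<partial>Gam (fst (snd q)) (snd (snd q)))
      \<in> borel_measurable (hxa_space i)"
    by (rule nn_integral_measurable_subprob_algebra2[OF _ measurable_Gam_snd]) measurable
  then have G: "?G \<in> borel_measurable (hxa_space i)"
    by (simp add: case_prod_beta)
  have "(\<integral>\<^sup>+\<omega>. F (hist X A Y i \<omega>, X i \<omega>, A i \<omega>, Y i \<omega>) \<partial>M)
      = (\<integral>\<^sup>+q. F q \<partial>distr M (hxay_space i) (\<lambda>\<omega>. (hist X A Y i \<omega>, X i \<omega>, A i \<omega>, Y i \<omega>)))"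
    using i by (simp add: nn_integral_distr)
  also have "\<dots> = (\<integral>\<^sup>+q. \<integral>\<^sup>+p. F p \<partial>?K q \<partial>?D)"
    unfolding law_Y[OF i] using F K by (rule nn_integral_bind)
  also have "\<dots> = (\<integral>\<^sup>+q. ?G q \<partial>?D)"
  proof (intro nn_integral_cong)
    fix q assume "q \<in> space ?D"
    then obtain h x a where q: "q = (h, x, a)" "h \<in> space (histM LX LA i)" "x \<in> space LX"
      "a \<in> space LA"
      by (auto simp: space_pair_measure)
    then have "(\<lambda>y. (h, x, a, y)) \<in> measurable (Gam x a) (hxay_space i)"
      by (simp add: measurable_cong_sets[OF sets_Gam refl])
    then show "(\<integral>\<^sup>+p. F p \<partial>?K q) = ?G q"
      by (simp add: q nn_integral_distr)
  qed
  also have "\<dots> = (\<integral>\<^sup>+\<omega>. ?G (hist X A Y i \<omega>, X i \<omega>, A i \<omega>) \<partial>M)"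
    using i G by (simp add: nn_integral_distr)
  finally show ?thesis
    by simp
qed

lemma measurable_pol_action:
  "i < n \<Longrightarrow> h \<in> space (histM LX LA i) \<Longrightarrow> x \<in> space LX \<Longrightarrow> (\<lambda>a. pol i x h a) \<in> borel_measurable LA"
  by measurable

lemma integral_pol:
  assumes "i < n" and "h \<in> space (histM LX LA i)" and "x \<in> space LX"
  shows "integrable LA (\<lambda>a. pol i x h a)" "(\<integral>a. pol i x h a \<partial>LA) = 1"
  using nn_integral_eq_integrable[OF measurable_pol_action[OF assms], of 1] pol_norm[OF assms(1,3,2)]
    pol_pos[OF assms(1,3,2)] by (auto intro!: AE_I2 less_imp_le)

lemma nn_integral_pol_mult_const:
  "i < n \<Longrightarrow> h \<in> space (histM LX LA i) \<Longrightarrow> x \<in> space LX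
    \<Longrightarrow> (\<integral>\<^sup>+a. ennreal (pol i x h a) * c \<partial>LA) = c"
  using measurable_pol_action pol_norm by (simp add: nn_integral_multc)

lemma integral_hist_context_action_eq_0:
  fixes F :: "(nat \<Rightarrow> 'x \<times> 'a \<times> real) \<Rightarrow> 'x \<Rightarrow> 'a \<Rightarrow> real"
  assumes i: "i < n"
    and F_meas: "(\<lambda>(h, x, a). F h x a) \<in> borel_measurable (hxa_space i)"
    and F_int: "integrable M (\<lambda>w. F (hist X A Y i w) (X i w) (A i w))"
    and symm: "\<And>h. h \<in> space (histM LX LA i) \<Longrightarrow>
      (\<integral>\<^sup>+x. \<integral>\<^sup>+a. ennreal (pol i x h a) * ennreal (F h x a) \<partial>LA \<partial>Xi)
      = (\<integral>\<^sup>+x. \<integral>\<^sup>+a. ennreal (pol i x h a) * ennreal (- F h x a) \<partial>LA \<partial>Xi)"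
  shows "(\<integral>w. F (hist X A Y i w) (X i w) (A i w) \<partial>M) = 0"
proof -
  have pos: "(\<lambda>q. ennreal ((\<lambda>(h, x, a). F h x a) q)) \<in> borel_measurable (hxa_space i)"
    and neg: "(\<lambda>q. ennreal (- (\<lambda>(h, x, a). F h x a) q)) \<in> borel_measurable (hxa_space i)"
    using F_meas by measurable
  have "(\<integral>\<^sup>+w. ennreal (F (hist X A Y i w) (X i w) (A i w)) \<partial>M)
      = (\<integral>\<^sup>+h. \<integral>\<^sup>+x. \<integral>\<^sup>+a. ennreal (pol i x h a) * ennreal (F h x a) \<partial>LA \<partial>Xi \<partial>hist_law i)"
    using nn_integral_hist_context_action[OF i pos] by simp
  also have "\<dots> = (\<integral>\<^sup>+h. \<integral>\<^sup>+x. \<integral>\<^sup>+a. ennreal (pol i x h a) * ennreal (- F h x a) \<partial>LA \<partial>Xi \<partial>hist_law i)"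
    by (rule nn_integral_cong) (simp add: symm)
  also have "\<dots> = (\<integral>\<^sup>+w. ennreal (- F (hist X A Y i w) (X i w) (A i w)) \<partial>M)"
    using nn_integral_hist_context_action[OF i neg] by simp
  finally show ?thesis
    using integral_eq_0_iff_nn_integral_parts_eq[OF F_int] by simp
qed

lemma integral_eq_0_if_centred_in_action:
  fixes F :: "(nat \<Rightarrow> 'x \<times> 'a \<times> real) \<Rightarrow> 'x \<Rightarrow> 'a \<Rightarrow> real"
  assumes i: "i < n"
    and F_meas: "(\<lambda>(h, x, a). F h x a) \<in> borel_measurable (hxa_space i)"
    and F_int: "integrable M (\<lambda>w. F (hist X A Y i w) (X i w) (A i w))"
    and centred: "\<And>h x. h \<in> space (histM LX LA i) \<Longrightarrow> x \<in> space LX \<Longrightarrow>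
      integrable LA (\<lambda>a. pol i x h a * F h x a) \<and> (\<integral>a. pol i x h a * F h x a \<partial>LA) = 0"
  shows "(\<integral>w. F (hist X A Y i w) (X i w) (A i w) \<partial>M) = 0"
proof (rule integral_hist_context_action_eq_0[OF i F_meas F_int])
  fix h assume h: "h \<in> space (histM LX LA i)"
  show "(\<integral>\<^sup>+x. \<integral>\<^sup>+a. ennreal (pol i x h a) * ennreal (F h x a) \<partial>LA \<partial>Xi)
      = (\<integral>\<^sup>+x. \<integral>\<^sup>+a. ennreal (pol i x h a) * ennreal (- F h x a) \<partial>LA \<partial>Xi)"
  proof (rule nn_integral_cong)
    fix x assume "x \<in> space Xi"
    then have x: "x \<in> space LX" by (simp add: space_Xi)
    have pol_nonneg: "\<And>a. a \<in> space LA \<Longrightarrow> 0 \<le> pol i x h a"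
      using pol_pos[OF i x h] by (simp add: less_imp_le)
    have "(\<integral>\<^sup>+a. ennreal (pol i x h a) * ennreal (F h x a) \<partial>LA)
        = (\<integral>\<^sup>+a. ennreal (pol i x h a * F h x a) \<partial>LA)"
      by (rule nn_integral_cong) (simp add: pol_nonneg ennreal_mult')
    also have "\<dots> = (\<integral>\<^sup>+a. ennreal (- (pol i x h a * F h x a)) \<partial>LA)"
      using integral_eq_0_iff_nn_integral_parts_eq centred[OF h x] by blast
    also have "\<dots> = (\<integral>\<^sup>+a. ennreal (pol i x h a) * ennreal (- F h x a) \<partial>LA)"
      by (rule nn_integral_cong) (simp add: pol_nonneg ennreal_mult'[symmetric])
    finally show "(\<integral>\<^sup>+a. ennreal (pol i x h a) * ennreal (F h x a) \<partial>LA)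
        = (\<integral>\<^sup>+a. ennreal (pol i x h a) * ennreal (- F h x a) \<partial>LA)" .
  qed
qed

lemma integral_eq_0_if_centred_in_context:
  fixes F :: "(nat \<Rightarrow> 'x \<times> 'a \<times> real) \<Rightarrow> 'x \<Rightarrow> real"
  assumes i: "i < n"
    and F_meas: "(\<lambda>(h, x). F h x) \<in> borel_measurable (histM LX LA i \<Otimes>\<^sub>M LX)"
    and F_int: "integrable M (\<lambda>w. F (hist X A Y i w) (X i w))"
    and centred: "\<And>h. h \<in> space (histM LX LA i) \<Longrightarrow> integrable Xi (F h) \<and> (\<integral>x. F h x \<partial>Xi) = 0"
  shows "(\<integral>w. F (hist X A Y i w) (X i w) \<partial>M) = 0"
proof (rule integral_hist_context_action_eq_0[OF i, where F = "\<lambda>h x a. F h x"])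
  show "(\<lambda>(h, x, a). F h x) \<in> borel_measurable (hxa_space i)"
    using F_meas by measurable
  fix h assume h: "h \<in> space (histM LX LA i)"
  have "(\<integral>\<^sup>+x. \<integral>\<^sup>+a. ennreal (pol i x h a) * ennreal (F h x) \<partial>LA \<partial>Xi)
      = (\<integral>\<^sup>+x. ennreal (F h x) \<partial>Xi)"
    by (intro nn_integral_cong) (simp add: nn_integral_pol_mult_const[OF i h] space_Xi)
  also have "\<dots> = (\<integral>\<^sup>+x. ennreal (- F h x) \<partial>Xi)"
    using integral_eq_0_iff_nn_integral_parts_eq centred[OF h] by blast
  also have "\<dots> = (\<integral>\<^sup>+x. \<integral>\<^sup>+a. ennreal (pol i x h a) * ennreal (- F h x) \<partial>LA \<partial>Xi)"
    by (intro nn_integral_cong) (simp add: nn_integral_pol_mult_const[OF i h] space_Xi)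
  finally show "(\<integral>\<^sup>+x. \<integral>\<^sup>+a. ennreal (pol i x h a) * ennreal (F h x) \<partial>LA \<partial>Xi)
      = (\<integral>\<^sup>+x. \<integral>\<^sup>+a. ennreal (pol i x h a) * ennreal (- F h x) \<partial>LA \<partial>Xi)" .
qed (use F_int in simp)

lemma integral_eq_0_if_centred_in_outcome:
  fixes F :: "(nat \<Rightarrow> 'x \<times> 'a \<times> real) \<Rightarrow> 'x \<Rightarrow> 'a \<Rightarrow> real \<Rightarrow> real"
  assumes i: "i < n"
    and F_meas: "(\<lambda>(h, x, a, y). F h x a y) \<in> borel_measurable (hxay_space i)"
    and F_int: "integrable M (\<lambda>w. F (hist X A Y i w) (X i w) (A i w) (Y i w))"
    and centred: "\<And>h x a. h \<in> space (histM LX LA i) \<Longrightarrow> x \<in> space LX \<Longrightarrow> a \<in> space LA \<Longrightarrow>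
       integrable (Gam x a) (F h x a) \<and> (\<integral>y. F h x a y \<partial>Gam x a) = 0"
  shows "(\<integral>w. F (hist X A Y i w) (X i w) (A i w) (Y i w) \<partial>M) = 0"
proof -
  have pos: "(\<lambda>q. ennreal ((\<lambda>(h, x, a, y). F h x a y) q)) \<in> borel_measurable (hxay_space i)"
    and neg: "(\<lambda>q. ennreal (- (\<lambda>(h, x, a, y). F h x a y) q)) \<in> borel_measurable (hxay_space i)"
    using F_meas by measurable
  have "(\<integral>\<^sup>+w. ennreal (F (hist X A Y i w) (X i w) (A i w) (Y i w)) \<partial>M)
      = (\<integral>\<^sup>+w. \<integral>\<^sup>+y. ennreal (F (hist X A Y i w) (X i w) (A i w) y) \<partial>Gam (X i w) (A i w) \<partial>M)"
    using nn_integral_outcome[OF i pos] by simp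
  also have "\<dots> = (\<integral>\<^sup>+w. \<integral>\<^sup>+y. ennreal (- F (hist X A Y i w) (X i w) (A i w) y) \<partial>Gam (X i w) (A i w) \<partial>M)"
  proof (rule nn_integral_cong)
    fix w assume "w \<in> space M"
    from centred[OF sample_in_space[OF i this]]
    show "(\<integral>\<^sup>+y. ennreal (F (hist X A Y i w) (X i w) (A i w) y) \<partial>Gam (X i w) (A i w))
        = (\<integral>\<^sup>+y. ennreal (- F (hist X A Y i w) (X i w) (A i w) y) \<partial>Gam (X i w) (A i w))"
      using integral_eq_0_iff_nn_integral_parts_eq by blast
  qed
  also have "\<dots> = (\<integral>\<^sup>+w. ennreal (- F (hist X A Y i w) (X i w) (A i w) (Y i w)) \<partial>M)"
    using nn_integral_outcome[OF i neg] by simp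
  finally show ?thesis
    using integral_eq_0_iff_nn_integral_parts_eq[OF F_int] by simp
qed

definition ipw :: "nat \<Rightarrow> (nat \<Rightarrow> 'x \<times> 'a \<times> real) \<Rightarrow> 'x \<Rightarrow> 'a \<Rightarrow> real" where
  "ipw i h x a = g x a / pol i x h a"

definition noise_at :: "nat \<Rightarrow> (nat \<Rightarrow> 'x \<times> 'a \<times> real) \<Rightarrow> 'x \<Rightarrow> 'a \<Rightarrow> real \<Rightarrow> real" where
  "noise_at i h x a y = ipw i h x a * (y - mu_star Gam x a)"

definition ipw_err_at :: "nat \<Rightarrow> (nat \<Rightarrow> 'x \<times> 'a \<times> real) \<Rightarrow> 'x \<Rightarrow> 'a \<Rightarrow> real" where
  "ipw_err_at i h x a = ipw i h x a * (mu_star Gam x a - muhat i h x a)"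

definition plugin_err_at :: "nat \<Rightarrow> (nat \<Rightarrow> 'x \<times> 'a \<times> real) \<Rightarrow> 'x \<Rightarrow> real" where
  "plugin_err_at i h x = inner_A LA (g x) (muhat i h x) - inner_A LA (g x) (mu_star Gam x)"

definition est_err_at :: "nat \<Rightarrow> (nat \<Rightarrow> 'x \<times> 'a \<times> real) \<Rightarrow> 'x \<Rightarrow> 'a \<Rightarrow> real" where
  "est_err_at i h x a = ipw_err_at i h x a + plugin_err_at i h x"

definition ctx_dev_at :: "'x \<Rightarrow> real" where
  "ctx_dev_at x = inner_A LA (g x) (mu_star Gam x) - tau Xi LA Gam g"

lemma measurable_plugin_err_at_comp[measurable]:
  assumes "i < n" and [measurable]: "h \<in> measurable N (histM LX LA i)" "x \<in> measurable N LX"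
  shows "(\<lambda>w. plugin_err_at i (h w) (x w)) \<in> borel_measurable N"
  unfolding plugin_err_at_def using assms(1) by measurable

lemma measurable_est_err_at_comp[measurable]:
  assumes "i < n" and [measurable]: "h \<in> measurable N (histM LX LA i)" "x \<in> measurable N LX"
    "a \<in> measurable N LA"
  shows "(\<lambda>w. ipw i (h w) (x w) (a w)) \<in> borel_measurable N"
    and "(\<lambda>w. ipw_err_at i (h w) (x w) (a w)) \<in> borel_measurable N"
    and "(\<lambda>w. est_err_at i (h w) (x w) (a w)) \<in> borel_measurable N"
  unfolding est_err_at_def ipw_err_at_def ipw_def using assms(1) by measurable

lemma measurable_noise_at_comp[measurable]:
  assumes "i < n" and [measurable]: "h \<in> measurable N (histM LX LA i)" "x \<in> measurable N LX"
    "a \<in> measurable N LA" "y \<in> borel_measurable N"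
  shows "(\<lambda>w. noise_at i (h w) (x w) (a w) (y w)) \<in> borel_measurable N"
  unfolding noise_at_def using assms(1) by measurable

lemma measurable_ctx_dev_at[measurable]: "ctx_dev_at \<in> borel_measurable LX"
  unfolding ctx_dev_at_def by measurable

definition noise :: "nat \<Rightarrow> 'w \<Rightarrow> real" where
  "noise i w = noise_at i (hist X A Y i w) (X i w) (A i w) (Y i w)"

definition ipw_err :: "nat \<Rightarrow> 'w \<Rightarrow> real" where
  "ipw_err i w = ipw_err_at i (hist X A Y i w) (X i w) (A i w)"

definition plugin_err :: "nat \<Rightarrow> 'w \<Rightarrow> real" where
  "plugin_err i w = plugin_err_at i (hist X A Y i w) (X i w)"

definition est_err :: "nat \<Rightarrow> 'w \<Rightarrow> real" where
  "est_err i w = est_err_at i (hist X A Y i w) (X i w) (A i w)"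

definition ctx_dev :: "nat \<Rightarrow> 'w \<Rightarrow> real" where
  "ctx_dev i w = ctx_dev_at (X i w)"

definition score_dev :: "nat \<Rightarrow> 'w \<Rightarrow> real" where
  "score_dev i w = aipw_score LA g pol muhat X A Y i w - tau Xi LA Gam g"

lemma score_dev_decomp: "score_dev i w = noise i w + est_err i w + ctx_dev i w"
  unfolding score_dev_def noise_def est_err_def ctx_dev_def aipw_score_def ipw_def[symmetric]
    noise_at_def est_err_at_def ipw_err_at_def plugin_err_at_def ctx_dev_at_def
  by (simp add: algebra_simps)

lemma est_err_decomp: "est_err i w = ipw_err i w + plugin_err i w"
  unfolding est_err_def ipw_err_def plugin_err_def est_err_at_def by simp

lemma measurable_errors:
  assumes "i < n"
  shows "noise i \<in> borel_measurable M" "ipw_err i \<in> borel_measurable M"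
    "plugin_err i \<in> borel_measurable M" "est_err i \<in> borel_measurable M"
    "ctx_dev i \<in> borel_measurable M" "score_dev i \<in> borel_measurable M"
proof -
  note [measurable] = X_meas[OF assms] A_meas[OF assms] Y_meas[OF assms]
    measurable_hist[OF less_imp_le[OF assms]] measurable_plugin_err_at_comp[OF assms]
    measurable_est_err_at_comp[OF assms] measurable_noise_at_comp[OF assms]
  show "noise i \<in> borel_measurable M" "ipw_err i \<in> borel_measurable M"
    "plugin_err i \<in> borel_measurable M" "est_err i \<in> borel_measurable M"
    "ctx_dev i \<in> borel_measurable M"
    unfolding noise_def ipw_err_def plugin_err_def est_err_def ctx_dev_def by measurable
  then show "score_dev i \<in> borel_measurable M"
    by (simp add: score_dev_decomp[abs_def])
qed

lemma Gam_moments: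
  assumes x: "x \<in> space LX" and a: "a \<in> space LA"
  shows "integrable (Gam x a) (\<lambda>y. y)" "integrable (Gam x a) (\<lambda>y. (y - mu_star Gam x a)\<^sup>2)"
    "0 \<le> sigma2 Gam x a"
proof -
  interpret prob_space "Gam x a" by (rule Gam_prob[OF x a])
  show y: "integrable (Gam x a) (\<lambda>y. y)"
    by (rule square_integrable_imp_integrable[OF _ Gam_sq[OF x a]])
      (simp add: measurable_cong_sets[OF sets_Gam[OF x a] refl])
  show "integrable (Gam x a) (\<lambda>y. (y - mu_star Gam x a)\<^sup>2)"
    using y Gam_sq[OF x a] by (simp add: power2_diff)
  show "0 \<le> sigma2 Gam x a"
    unfolding sigma2_def by simp
qed

lemma noise_at_centred:
  assumes "x \<in> space LX" and "a \<in> space LA"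
  shows "integrable (Gam x a) (\<lambda>y. c * noise_at i h x a y)
    \<and> (\<integral>y. c * noise_at i h x a y \<partial>Gam x a) = 0"
proof -
  interpret prob_space "Gam x a" by (rule Gam_prob[OF assms])
  have "\<And>y. c * noise_at i h x a y = c * ipw i h x a * y - c * ipw i h x a * mu_star Gam x a"
    by (simp add: noise_at_def algebra_simps)
  then show ?thesis
    using Gam_moments(1)[OF assms] by (simp add: mu_star_def prob_space)
qed

lemma integral_pol_ipw_err_at:
  assumes i: "i < n" and h: "h \<in> space (histM LX LA i)" and x: "x \<in> space LX"
  shows "integrable LA (\<lambda>a. pol i x h a * ipw_err_at i h x a)"
    "(\<integral>a. pol i x h a * ipw_err_at i h x a \<partial>LA) = - plugin_err_at i h x"
proof -
  have eq: "pol i x h a * ipw_err_at i h x a = g x a * mu_star Gam x a - g x a * muhat i h x a"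
    if "a \<in> space LA" for a
    using pol_pos[OF i x h that] by (simp add: ipw_err_at_def ipw_def algebra_simps)
  show "integrable LA (\<lambda>a. pol i x h a * ipw_err_at i h x a)"
    using int_gmu[OF x] int_gmuhat[OF i h x] by (simp add: Bochner_Integration.integrable_cong[OF refl eq])
  show "(\<integral>a. pol i x h a * ipw_err_at i h x a \<partial>LA) = - plugin_err_at i h x"
    using int_gmu[OF x] int_gmuhat[OF i h x]
    by (simp add: Bochner_Integration.integral_cong[OF refl eq] plugin_err_at_def inner_A_def)
qed

lemma est_err_at_centred:
  assumes i: "i < n" and h: "h \<in> space (histM LX LA i)" and x: "x \<in> space LX"
  shows "integrable LA (\<lambda>a. pol i x h a * (c * est_err_at i h x a))
    \<and> (\<integral>a. pol i x h a * (c * est_err_at i h x a) \<partial>LA) = 0"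
proof -
  have "\<And>a. pol i x h a * (c * est_err_at i h x a)
      = c * (pol i x h a * ipw_err_at i h x a) + c * plugin_err_at i h x * pol i x h a"
    by (simp add: est_err_at_def algebra_simps)
  then show ?thesis
    using integral_pol_ipw_err_at[OF i h x] integral_pol[OF i h x] by simp
qed

lemma ctx_dev_at_moments:
  "integrable Xi (\<lambda>x. (ctx_dev_at x)\<^sup>2)" "integrable Xi ctx_dev_at" "(\<integral>x. ctx_dev_at x \<partial>Xi) = 0"
proof -
  interpret prob_space Xi by (rule Xi_prob)
  show "integrable Xi (\<lambda>x. (ctx_dev_at x)\<^sup>2)"
    using int_var int_tau by (simp add: ctx_dev_at_def power2_diff)
  show "integrable Xi ctx_dev_at" "(\<integral>x. ctx_dev_at x \<partial>Xi) = 0"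
    using int_tau unfolding ctx_dev_at_def[abs_def] by (simp_all add: tau_def prob_space)
qed

lemma integral_mult_noise_eq_0:
  fixes G :: "(nat \<Rightarrow> 'x \<times> 'a \<times> real) \<times> 'x \<times> 'a \<Rightarrow> real"
  assumes i: "i < n" and [measurable]: "G \<in> borel_measurable (hxa_space i)"
    and "integrable M (\<lambda>w. G (hist X A Y i w, X i w, A i w) * noise i w)"
  shows "(\<integral>w. G (hist X A Y i w, X i w, A i w) * noise i w \<partial>M) = 0"
  unfolding noise_def
proof (rule integral_eq_0_if_centred_in_outcome[OF i, where F = "\<lambda>h x a y. G (h, x, a) * noise_at i h x a y"])
  show "(\<lambda>(h, x, a, y). G (h, x, a) * noise_at i h x a y) \<in> borel_measurable (hxay_space i)"
    using i by measurable
qed (use assms noise_at_centred in \<open>auto simp: noise_def\<close>)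

lemma integral_mult_est_err_eq_0:
  fixes G :: "(nat \<Rightarrow> 'x \<times> 'a \<times> real) \<times> 'x \<Rightarrow> real"
  assumes i: "i < n" and [measurable]: "G \<in> borel_measurable (histM LX LA i \<Otimes>\<^sub>M LX)"
    and "integrable M (\<lambda>w. G (hist X A Y i w, X i w) * est_err i w)"
  shows "(\<integral>w. G (hist X A Y i w, X i w) * est_err i w \<partial>M) = 0"
  unfolding est_err_def
proof (rule integral_eq_0_if_centred_in_action[OF i, where F = "\<lambda>h x a. G (h, x) * est_err_at i h x a"])
  show "(\<lambda>(h, x, a). G (h, x) * est_err_at i h x a) \<in> borel_measurable (hxa_space i)"
    using i by measurable
qed (use assms est_err_at_centred in \<open>auto simp: est_err_def\<close>)

lemma integral_mult_ctx_dev_eq_0: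
  fixes G :: "(nat \<Rightarrow> 'x \<times> 'a \<times> real) \<Rightarrow> real"
  assumes i: "i < n" and [measurable]: "G \<in> borel_measurable (histM LX LA i)"
    and "integrable M (\<lambda>w. G (hist X A Y i w) * ctx_dev i w)"
  shows "(\<integral>w. G (hist X A Y i w) * ctx_dev i w \<partial>M) = 0"
  unfolding ctx_dev_def
proof (rule integral_eq_0_if_centred_in_context[OF i, where F = "\<lambda>h x. G h * ctx_dev_at x"])
  show "(\<lambda>(h, x). G h * ctx_dev_at x) \<in> borel_measurable (histM LX LA i \<Otimes>\<^sub>M LX)"
    by measurable
qed (use assms ctx_dev_at_moments in \<open>auto simp: ctx_dev_def\<close>)

lemma noise_second_moment:
  assumes i: "i < n"
  shows "integrable M (\<lambda>w. (noise i w)\<^sup>2)"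
    "(\<integral>w. (noise i w)\<^sup>2 \<partial>M) = (\<integral>w. (g (X i w) (A i w))\<^sup>2 * (sqrt (sigma2 Gam (X i w) (A i w)))\<^sup>2
          / (pol i (X i w) (hist X A Y i w) (A i w))\<^sup>2 \<partial>M)"
proof -
  let ?S = "\<lambda>w. (g (X i w) (A i w))\<^sup>2 * (sqrt (sigma2 Gam (X i w) (A i w)))\<^sup>2
          / (pol i (X i w) (hist X A Y i w) (A i w))\<^sup>2"
  have inner: "(\<integral>\<^sup>+y. ennreal ((noise_at i h x a y)\<^sup>2) \<partial>Gam x a) = ennreal ((ipw i h x a)\<^sup>2 * sigma2 Gam x a)"
    if "x \<in> space LX" "a \<in> space LA" for h x a
  proof -
    have "integrable (Gam x a) (\<lambda>y. (ipw i h x a)\<^sup>2 * (y - mu_star Gam x a)\<^sup>2)"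
      using Gam_moments(2)[OF that] by simp
    then show ?thesis
      by (simp add: noise_at_def power_mult_distrib nn_integral_eq_integral sigma2_def)
  qed
  have "(\<lambda>q. ennreal ((\<lambda>(h, x, a, y). (noise_at i h x a y)\<^sup>2) q)) \<in> borel_measurable (hxay_space i)"
    using i by measurable
  from nn_integral_outcome[OF i this]
  have "(\<integral>\<^sup>+w. ennreal ((noise i w)\<^sup>2) \<partial>M)
      = (\<integral>\<^sup>+w. ennreal ((ipw i (hist X A Y i w) (X i w) (A i w))\<^sup>2 * sigma2 Gam (X i w) (A i w)) \<partial>M)"
    by (simp add: noise_def inner sample_in_space[OF i] cong: nn_integral_cong)
  also have "\<dots> = (\<integral>\<^sup>+w. ennreal (?S w) \<partial>M)"
    using Gam_moments(3)[OF sample_in_space(2,3)[OF i]]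
    by (intro nn_integral_cong) (simp add: ipw_def power_divide)
  also have "\<dots> = ennreal (\<integral>w. ?S w \<partial>M)"
    by (rule nn_integral_eq_integral[OF int_sigma[OF i]]) simp
  finally show "integrable M (\<lambda>w. (noise i w)\<^sup>2)" "(\<integral>w. (noise i w)\<^sup>2 \<partial>M) = (\<integral>w. ?S w \<partial>M)"
    using nn_integral_eq_integrable[of "\<lambda>w. (noise i w)\<^sup>2"] measurable_errors(1)[OF i]
    by (auto intro: integral_nonneg_AE)
qed

lemma ctx_dev_second_moment:
  assumes i: "i < n"
  shows "integrable M (\<lambda>w. (ctx_dev i w)\<^sup>2)" "(\<integral>w. (ctx_dev i w)\<^sup>2 \<partial>M) = (\<integral>x. (ctx_dev_at x)\<^sup>2 \<partial>Xi)"
proof -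
  interpret hist_law: prob_space "hist_law i"
    using hist_law_prob i by simp
  have "emeasure (hist_law i) (space (histM LX LA i)) = 1"
    using hist_law.emeasure_space_1 by simp
  have "(\<lambda>q. ennreal ((\<lambda>(h, x, a). (ctx_dev_at x)\<^sup>2) q)) \<in> borel_measurable (hxa_space i)"
    by measurable
  from nn_integral_hist_context_action[OF i this]
  have "(\<integral>\<^sup>+w. ennreal ((ctx_dev i w)\<^sup>2) \<partial>M)
      = (\<integral>\<^sup>+h. \<integral>\<^sup>+x. \<integral>\<^sup>+a. ennreal (pol i x h a) * ennreal ((ctx_dev_at x)\<^sup>2) \<partial>LA \<partial>Xi \<partial>hist_law i)"
    by (simp add: ctx_dev_def)
  also have "\<dots> = (\<integral>\<^sup>+h. \<integral>\<^sup>+x. ennreal ((ctx_dev_at x)\<^sup>2) \<partial>Xi \<partial>hist_law i)"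
    by (intro nn_integral_cong) (simp add: nn_integral_pol_mult_const[OF i] space_Xi)
  also have "\<dots> = ennreal (\<integral>x. (ctx_dev_at x)\<^sup>2 \<partial>Xi)"
    by (simp add: \<open>emeasure (hist_law i) (space (histM LX LA i)) = 1\<close>
        nn_integral_eq_integral[OF ctx_dev_at_moments(1)])
  finally show "integrable M (\<lambda>w. (ctx_dev i w)\<^sup>2)"
    "(\<integral>w. (ctx_dev i w)\<^sup>2 \<partial>M) = (\<integral>x. (ctx_dev_at x)\<^sup>2 \<partial>Xi)"
    using nn_integral_eq_integrable[of "\<lambda>w. (ctx_dev i w)\<^sup>2"] measurable_errors(5)[OF i]
    by (auto intro: integral_nonneg_AE)
qed

lemma ipw_err_square:
  "(ipw_err i w)\<^sup>2 = (g (X i w) (A i w))\<^sup>2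
      * (muhat i (hist X A Y i w) (X i w) (A i w) - mu_star Gam (X i w) (A i w))\<^sup>2
      / (pol i (X i w) (hist X A Y i w) (A i w))\<^sup>2"
  by (simp add: ipw_err_def ipw_err_at_def ipw_def power_mult_distrib power_divide power2_commute)

text \<open>By Jensen's inequality for the action density, the plug-in error is dominated by the
  weighted error.\<close>

lemma plugin_err_nn_second_moment_le:
  assumes i: "i < n"
  shows "(\<integral>\<^sup>+w. ennreal ((plugin_err i w)\<^sup>2) \<partial>M) \<le> (\<integral>\<^sup>+w. ennreal ((ipw_err i w)\<^sup>2) \<partial>M)"
proof -
  have "(\<lambda>q. ennreal ((\<lambda>(h, x, a). (plugin_err_at i h x)\<^sup>2) q)) \<in> borel_measurable (hxa_space i)"
    "(\<lambda>q. ennreal ((\<lambda>(h, x, a). (ipw_err_at i h x a)\<^sup>2) q)) \<in> borel_measurable (hxa_space i)"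
    using i by measurable
  note disintegrate = this[THEN nn_integral_hist_context_action[OF i]]
  have "(\<integral>\<^sup>+w. ennreal ((plugin_err i w)\<^sup>2) \<partial>M)
      = (\<integral>\<^sup>+h. \<integral>\<^sup>+x. \<integral>\<^sup>+a. ennreal (pol i x h a) * ennreal ((plugin_err_at i h x)\<^sup>2) \<partial>LA \<partial>Xi \<partial>hist_law i)"
    using disintegrate(1) by (simp add: plugin_err_def)
  also have "\<dots> \<le> (\<integral>\<^sup>+h. \<integral>\<^sup>+x. \<integral>\<^sup>+a. ennreal (pol i x h a) * ennreal ((ipw_err_at i h x a)\<^sup>2) \<partial>LA \<partial>Xi \<partial>hist_law i)"
  proof (rule nn_integral_mono, rule nn_integral_mono)
    fix h x assume "h \<in> space (hist_law i)" "x \<in> space Xi"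
    then have h: "h \<in> space (histM LX LA i)" and x: "x \<in> space LX"
      by (simp_all add: space_Xi)
    have "ennreal ((\<integral>a. pol i x h a * ipw_err_at i h x a \<partial>LA)\<^sup>2)
        \<le> (\<integral>\<^sup>+a. ennreal (pol i x h a) * ennreal ((ipw_err_at i h x a)\<^sup>2) \<partial>LA)"
      using i h x pol_pos[OF i x h] pol_norm[OF i x h]
      by (intro square_integral_density_le) (auto intro: less_imp_le)
    then show "(\<integral>\<^sup>+a. ennreal (pol i x h a) * ennreal ((plugin_err_at i h x)\<^sup>2) \<partial>LA)
        \<le> (\<integral>\<^sup>+a. ennreal (pol i x h a) * ennreal ((ipw_err_at i h x a)\<^sup>2) \<partial>LA)"
      by (simp add: integral_pol_ipw_err_at[OF i h x] nn_integral_pol_mult_const[OF i h x])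
  qed
  also have "\<dots> = (\<integral>\<^sup>+w. ennreal ((ipw_err i w)\<^sup>2) \<partial>M)"
    using disintegrate(2) by (simp add: ipw_err_def)
  finally show ?thesis .
qed

lemma square_integrable_errors:
  assumes i: "i < n"
  shows "integrable M (\<lambda>w. (ipw_err i w)\<^sup>2)" "integrable M (\<lambda>w. (plugin_err i w)\<^sup>2)"
    "integrable M (\<lambda>w. (est_err i w)\<^sup>2)" "integrable M (\<lambda>w. (score_dev i w)\<^sup>2)"
proof -
  note meas = measurable_errors[OF i]
  show a: "integrable M (\<lambda>w. (ipw_err i w)\<^sup>2)"
    using int_err[OF i] by (simp add: ipw_err_square)
  show b: "integrable M (\<lambda>w. (plugin_err i w)\<^sup>2)"
    using plugin_err_nn_second_moment_le[OF i] meas(3) a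
    by (intro integrableI_nonneg) (auto simp: integrable_iff_bounded intro: le_less_trans)
  show v: "integrable M (\<lambda>w. (est_err i w)\<^sup>2)"
    unfolding est_err_decomp using meas a b by (intro integrable_square_add)
  have "integrable M (\<lambda>w. (noise i w + est_err i w + ctx_dev i w)\<^sup>2)"
    using meas v noise_second_moment(1)[OF i] ctx_dev_second_moment(1)[OF i]
    by (intro integrable_square_add) auto
  then show "integrable M (\<lambda>w. (score_dev i w)\<^sup>2)"
    by (simp add: score_dev_decomp)
qed

lemma est_err_second_moment_le:
  assumes i: "i < n"
  shows "(\<integral>w. (est_err i w)\<^sup>2 \<partial>M) \<le> (\<integral>w. (ipw_err i w)\<^sup>2 \<partial>M)"
proof -
  note meas = measurable_errors[OF i] and sq = square_integrable_errors[OF i]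
  have ab: "integrable M (\<lambda>w. ipw_err i w * plugin_err i w)"
    using meas sq by (intro integrable_mult_of_square_integrable)
  have "(\<lambda>(h, x). plugin_err_at i h x) \<in> borel_measurable (histM LX LA i \<Otimes>\<^sub>M LX)"
    using i by measurable
  moreover have "integrable M (\<lambda>w. plugin_err i w * est_err i w)"
    using meas sq by (intro integrable_mult_of_square_integrable)
  ultimately have "(\<integral>w. plugin_err i w * est_err i w \<partial>M) = 0"
    using integral_mult_est_err_eq_0[OF i, of "\<lambda>(h, x). plugin_err_at i h x"]
    by (simp add: plugin_err_def)
  then have cross: "(\<integral>w. ipw_err i w * plugin_err i w \<partial>M) = - (\<integral>w. (plugin_err i w)\<^sup>2 \<partial>M)"
    using ab sq(2) by (simp add: est_err_decomp distrib_left power2_eq_square mult.commute)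
  have "(\<integral>w. (est_err i w)\<^sup>2 \<partial>M)
      = (\<integral>w. (ipw_err i w)\<^sup>2 + (plugin_err i w)\<^sup>2 + 2 * (ipw_err i w * plugin_err i w) \<partial>M)"
    by (simp add: est_err_decomp power2_sum mult.assoc)
  also have "\<dots> = (\<integral>w. (ipw_err i w)\<^sup>2 \<partial>M) - (\<integral>w. (plugin_err i w)\<^sup>2 \<partial>M)"
    using ab sq(1,2) cross by simp
  also have "\<dots> \<le> (\<integral>w. (ipw_err i w)\<^sup>2 \<partial>M)"
    by simp
  finally show ?thesis .
qed

lemma score_dev_second_moment_le:
  assumes i: "i < n"
  shows "(\<integral>w. (score_dev i w)\<^sup>2 \<partial>M)
    \<le> (\<integral>w. (noise i w)\<^sup>2 \<partial>M) + (\<integral>w. (ipw_err i w)\<^sup>2 \<partial>M) + (\<integral>w. (ctx_dev i w)\<^sup>2 \<partial>M)"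
proof -
  note meas = measurable_errors[OF i]
  note sq = noise_second_moment(1)[OF i] square_integrable_errors(3)[OF i] ctx_dev_second_moment(1)[OF i]
  have VU: "integrable M (\<lambda>w. est_err i w * noise i w)"
    and WU: "integrable M (\<lambda>w. ctx_dev i w * noise i w)"
    and WV: "integrable M (\<lambda>w. ctx_dev i w * est_err i w)"
    by (rule integrable_mult_of_square_integrable[OF meas(4,1) sq(2,1)]
        integrable_mult_of_square_integrable[OF meas(5,1) sq(3,1)]
        integrable_mult_of_square_integrable[OF meas(5,4) sq(3,2)])+
  have "(\<lambda>(h, x, a). est_err_at i h x a) \<in> borel_measurable (hxa_space i)"
    "(\<lambda>(h, x, a). ctx_dev_at x) \<in> borel_measurable (hxa_space i)"
    "(\<lambda>(h, x). ctx_dev_at x) \<in> borel_measurable (histM LX LA i \<Otimes>\<^sub>M LX)"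
    using i by measurable
  from integral_mult_noise_eq_0[OF i this(1)] integral_mult_noise_eq_0[OF i this(2)]
    integral_mult_est_err_eq_0[OF i this(3)]
  have orth: "(\<integral>w. est_err i w * noise i w \<partial>M) = 0" "(\<integral>w. ctx_dev i w * noise i w \<partial>M) = 0"
    "(\<integral>w. ctx_dev i w * est_err i w \<partial>M) = 0"
    using VU WU WV by (simp_all add: est_err_def ctx_dev_def)
  have "(\<integral>w. (score_dev i w)\<^sup>2 \<partial>M) = (\<integral>w. (noise i w)\<^sup>2 + (est_err i w)\<^sup>2 + (ctx_dev i w)\<^sup>2
      + 2 * (est_err i w * noise i w) + 2 * (ctx_dev i w * noise i w) + 2 * (ctx_dev i w * est_err i w) \<partial>M)"
    by (simp add: score_dev_decomp power2_eq_square algebra_simps)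
  also have "\<dots> = (\<integral>w. (noise i w)\<^sup>2 \<partial>M) + (\<integral>w. (est_err i w)\<^sup>2 \<partial>M) + (\<integral>w. (ctx_dev i w)\<^sup>2 \<partial>M)"
    using sq VU WU WV orth by simp
  also have "\<dots> \<le> (\<integral>w. (noise i w)\<^sup>2 \<partial>M) + (\<integral>w. (ipw_err i w)\<^sup>2 \<partial>M) + (\<integral>w. (ctx_dev i w)\<^sup>2 \<partial>M)"
    using est_err_second_moment_le[OF i] by simp
  finally show ?thesis .
qed

definition past_score_dev :: "nat \<Rightarrow> (nat \<Rightarrow> 'x \<times> 'a \<times> real) \<Rightarrow> real" where
  "past_score_dev j h =
     noise_at j (restrict h {..<j}) (fst (h j)) (fst (snd (h j))) (snd (snd (h j)))
     + est_err_at j (restrict h {..<j}) (fst (h j)) (fst (snd (h j))) + ctx_dev_at (fst (h j))"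

lemma past_score_dev_hist:
  assumes "j < i"
  shows "past_score_dev j (hist X A Y i w) = score_dev j w"
proof -
  have "restrict (hist X A Y i w) {..<j} = hist X A Y j w" "hist X A Y i w j = (X j w, A j w, Y j w)"
    using assms by (auto simp: hist_def fun_eq_iff)
  then show ?thesis
    by (simp add: past_score_dev_def score_dev_decomp noise_def est_err_def ctx_dev_def)
qed

lemma measurable_past_score_dev:
  assumes "j < i" and "i < n"
  shows "past_score_dev j \<in> borel_measurable (histM LX LA i)"
proof -
  have j: "j < n" using assms by simp
  have [measurable]: "(\<lambda>h. restrict h {..<j}) \<in> measurable (histM LX LA i) (histM LX LA j)"
    unfolding histM_def by (rule measurable_restrict_subset) (use assms in auto)
  have "(\<lambda>h. h j) \<in> measurable (histM LX LA i) (LX \<Otimes>\<^sub>M LA \<Otimes>\<^sub>M borel)"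
    unfolding histM_def obsM_def by (rule measurable_component_singleton) (use assms in auto)
  then have [measurable]: "(\<lambda>h. fst (h j)) \<in> measurable (histM LX LA i) LX"
    "(\<lambda>h. fst (snd (h j))) \<in> measurable (histM LX LA i) LA"
    "(\<lambda>h. snd (snd (h j))) \<in> borel_measurable (histM LX LA i)"
    by measurable
  show ?thesis
    unfolding past_score_dev_def using j by measurable
qed

text \<open>Scores of different rounds are orthogonal: the earlier one is a function of the history of
  the later one, whose three components are centred given that history.\<close>

lemma score_dev_orthogonal:
  assumes ji: "j < i" and i: "i < n"
  shows "(\<integral>w. score_dev j w * score_dev i w \<partial>M) = 0"
proof -
  have j: "j < n" using ji i by simp
  note meas = measurable_errors[OF i] measurable_errors(6)[OF j]
    and sq = noise_second_moment(1)[OF i] square_integrable_errors(3)[OF i]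
      ctx_dev_second_moment(1)[OF i] square_integrable_errors(4)[OF j]
  have DU: "integrable M (\<lambda>w. score_dev j w * noise i w)"
    and DV: "integrable M (\<lambda>w. score_dev j w * est_err i w)"
    and DW: "integrable M (\<lambda>w. score_dev j w * ctx_dev i w)"
    by (rule integrable_mult_of_square_integrable[OF meas(7,1) sq(4,1)]
        integrable_mult_of_square_integrable[OF meas(7,4) sq(4,2)]
        integrable_mult_of_square_integrable[OF meas(7,5) sq(4,3)])+
  note [measurable] = measurable_past_score_dev[OF ji i]
  have "(\<lambda>(h, x, a). past_score_dev j h) \<in> borel_measurable (hxa_space i)"
    "(\<lambda>(h, x). past_score_dev j h) \<in> borel_measurable (histM LX LA i \<Otimes>\<^sub>M LX)"
    by measurable
  from integral_mult_noise_eq_0[OF i this(1)] integral_mult_est_err_eq_0[OF i this(2)]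
    integral_mult_ctx_dev_eq_0[OF i measurable_past_score_dev[OF ji i]]
  have "(\<integral>w. score_dev j w * noise i w \<partial>M) = 0" "(\<integral>w. score_dev j w * est_err i w \<partial>M) = 0"
    "(\<integral>w. score_dev j w * ctx_dev i w \<partial>M) = 0"
    using DU DV DW by (simp_all add: past_score_dev_hist[OF ji])
  then show ?thesis
    using DU DV DW by (simp add: score_dev_decomp[of i] distrib_left)
qed

lemma aipw_mse_le:
  "(\<integral>\<omega>. (tau_aipw LA g pol muhat X A Y n \<omega> - tau Xi LA Gam g)\<^sup>2 \<partial>M)
    \<le> (1 / real n) * (v_star_sq M Xi LA Gam g pol X A Y n
        + (1 / real n) * (\<Sum>i<n. \<integral>\<omega>. (g (X i \<omega>) (A i \<omega>))\<^sup>2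
            * (muhat i (hist X A Y i \<omega>) (X i \<omega>) (A i \<omega>) - mu_star Gam (X i \<omega>) (A i \<omega>))\<^sup>2
            / (pol i (X i \<omega>) (hist X A Y i \<omega>) (A i \<omega>))\<^sup>2 \<partial>M))"
proof -
  let ?S = "\<lambda>i. \<integral>\<omega>. (g (X i \<omega>) (A i \<omega>))\<^sup>2 * (sqrt (sigma2 Gam (X i \<omega>) (A i \<omega>)))\<^sup>2
          / (pol i (X i \<omega>) (hist X A Y i \<omega>) (A i \<omega>))\<^sup>2 \<partial>M"
  let ?E = "\<lambda>i. \<integral>\<omega>. (ipw_err i \<omega>)\<^sup>2 \<partial>M"
  let ?V = "\<integral>x. (ctx_dev_at x)\<^sup>2 \<partial>Xi"
  have "\<And>\<omega>. tau_aipw LA g pol muhat X A Y n \<omega> - tau Xi LA Gam g = (\<Sum>i<n. score_dev i \<omega>) / real n"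
    using n_pos by (simp add: tau_aipw_def score_dev_def sum_subtractf field_simps)
  then have "(\<integral>\<omega>. (tau_aipw LA g pol muhat X A Y n \<omega> - tau Xi LA Gam g)\<^sup>2 \<partial>M)
      = (\<integral>\<omega>. (\<Sum>i<n. score_dev i \<omega>)\<^sup>2 \<partial>M) / (real n)\<^sup>2"
    by (simp add: power_divide)
  also have "\<dots> = (\<Sum>i<n. \<integral>\<omega>. (score_dev i \<omega>)\<^sup>2 \<partial>M) / (real n)\<^sup>2"
  proof (subst integral_square_sum_orthogonal)
    fix i j assume "i \<in> {..<n}" "j \<in> {..<n}" "i \<noteq> j"
    then show "(\<integral>\<omega>. score_dev i \<omega> * score_dev j \<omega> \<partial>M) = 0"
      using score_dev_orthogonal[of i j] score_dev_orthogonal[of j i]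
      by (cases "i < j") (auto simp: mult.commute)
  qed (auto intro: measurable_errors square_integrable_errors)
  also have "\<dots> \<le> (\<Sum>i<n. ?S i + ?E i + ?V) / (real n)\<^sup>2"
    using score_dev_second_moment_le noise_second_moment(2) ctx_dev_second_moment(2)
    by (intro divide_right_mono sum_mono) auto
  also have "\<dots> = (1 / real n) * (?V + (1 / real n) * (\<Sum>i<n. ?S i) + (1 / real n) * (\<Sum>i<n. ?E i))"
    using n_pos by (simp add: sum.distrib power2_eq_square field_simps)
  finally show ?thesis
    by (simp add: v_star_sq_def norm_k_sq_def ipw_err_square ctx_dev_at_def tau_def algebra_simps)
qed

end


theorem theorem1:
  fixes M :: "'w measure"
    and LX :: "'x measure" and LA :: "'a measure"
    and Xi :: "'x measure" and Gam :: "'x \<Rightarrow> 'a \<Rightarrow> real measure"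
    and g :: "'x \<Rightarrow> 'a \<Rightarrow> real"
    and pol :: "nat \<Rightarrow> 'x \<Rightarrow> (nat \<Rightarrow> 'x \<times> 'a \<times> real) \<Rightarrow> 'a \<Rightarrow> real"
    and muhat :: "nat \<Rightarrow> (nat \<Rightarrow> 'x \<times> 'a \<times> real) \<Rightarrow> 'x \<Rightarrow> 'a \<Rightarrow> real"
    and X :: "nat \<Rightarrow> 'w \<Rightarrow> 'x" and A :: "nat \<Rightarrow> 'w \<Rightarrow> 'a" and Y :: "nat \<Rightarrow> 'w \<Rightarrow> real"
    and n :: nat
  assumes n_pos: "0 < n"
    and sf_X: "sigma_finite_measure LX"
    and sf_A: "sigma_finite_measure LA"
    \<comment> \<open>true instance: Xi a probability measure on X, Gam a Markov kernel X x A \<rightarrow> Y\<close>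
    and Xi_prob: "prob_space Xi" and Xi_sets: "sets Xi = sets LX"
    and Gam_kernel: "(\<lambda>(x, a). Gam x a) \<in> measurable (LX \<Otimes>\<^sub>M LA) (subprob_algebra borel)"
    and Gam_prob: "\<And>x a. x \<in> space LX \<Longrightarrow> a \<in> space LA \<Longrightarrow> prob_space (Gam x a)"
    and Gam_sq: "\<And>x a. x \<in> space LX \<Longrightarrow> a \<in> space LA \<Longrightarrow> integrable (Gam x a) (\<lambda>y. y\<^sup>2)"
    \<comment> \<open>evaluation function\<close>
    and g_meas: "(\<lambda>(x, a). g x a) \<in> borel_measurable (LX \<Otimes>\<^sub>M LA)"
    \<comment> \<open>behavioural policies: densities (w.r.t. LA) of Markov kernels X x O^(i-1) \<rightarrow> A\<close>
    and pol_meas: "\<And>i. i < n \<Longrightarrow>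
        (\<lambda>(x, h, a). pol i x h a) \<in> borel_measurable (LX \<Otimes>\<^sub>M histM LX LA i \<Otimes>\<^sub>M LA)"
    and pol_pos: "\<And>i x h a. i < n \<Longrightarrow> x \<in> space LX \<Longrightarrow> h \<in> space (histM LX LA i)
        \<Longrightarrow> a \<in> space LA \<Longrightarrow> 0 < pol i x h a"
    and pol_norm: "\<And>i x h. i < n \<Longrightarrow> x \<in> space LX \<Longrightarrow> h \<in> space (histM LX LA i)
        \<Longrightarrow> (\<integral>\<^sup>+ a. ennreal (pol i x h a) \<partial>LA) = 1"
    \<comment> \<open>estimates depending measurably only on the past observations\<close>
    and muhat_meas: "\<And>i. i < n \<Longrightarrow>
        (\<lambda>(h, x, a). muhat i h x a) \<in> borel_measurable (histM LX LA i \<Otimes>\<^sub>M LX \<Otimes>\<^sub>M LA)"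
    \<comment> \<open>the data O_n under the true instance, realised on a probability space M\<close>
    and M_prob: "prob_space M"
    and X_meas: "\<And>i. i < n \<Longrightarrow> X i \<in> measurable M LX"
    and A_meas: "\<And>i. i < n \<Longrightarrow> A i \<in> measurable M LA"
    and Y_meas: "\<And>i. i < n \<Longrightarrow> Y i \<in> borel_measurable M"
    \<comment> \<open>X_i ~ Xi independent of O_(i-1), and A_i | (X_i, O_(i-1)) has density pi_i\<close>
    and law_XA: "\<And>i. i < n \<Longrightarrow>
        distr M (histM LX LA i \<Otimes>\<^sub>M LX \<Otimes>\<^sub>M LA) (\<lambda>\<omega>. (hist X A Y i \<omega>, X i \<omega>, A i \<omega>))
        = density (distr M (histM LX LA i) (hist X A Y i) \<Otimes>\<^sub>M Xi \<Otimes>\<^sub>M LA)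
                  (\<lambda>(h, x, a). ennreal (pol i x h a))"
    \<comment> \<open>Y_i | (X_i, A_i, O_(i-1)) ~ Gam(. | X_i, A_i)\<close>
    and law_Y: "\<And>i. i < n \<Longrightarrow>
        distr M (histM LX LA i \<Otimes>\<^sub>M LX \<Otimes>\<^sub>M LA \<Otimes>\<^sub>M borel)
              (\<lambda>\<omega>. (hist X A Y i \<omega>, X i \<omega>, A i \<omega>, Y i \<omega>))
        = distr M (histM LX LA i \<Otimes>\<^sub>M LX \<Otimes>\<^sub>M LA) (\<lambda>\<omega>. (hist X A Y i \<omega>, X i \<omega>, A i \<omega>))
          \<bind> (\<lambda>(h, x, a). distr (Gam x a) (histM LX LA i \<Otimes>\<^sub>M LX \<Otimes>\<^sub>M LA \<Otimes>\<^sub>M borel)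
                                   (\<lambda>y. (h, x, a, y)))"
    \<comment> \<open>all integrals / expectations appearing are finite\<close>
    and int_gmu: "\<And>x. x \<in> space LX \<Longrightarrow> integrable LA (\<lambda>a. g x a * mu_star Gam x a)"
    and int_gmuhat: "\<And>i h x. i < n \<Longrightarrow> h \<in> space (histM LX LA i) \<Longrightarrow> x \<in> space LX
        \<Longrightarrow> integrable LA (\<lambda>a. g x a * muhat i h x a)"
    and int_tau: "integrable Xi (\<lambda>x. inner_A LA (g x) (mu_star Gam x))"
    and int_var: "integrable Xi (\<lambda>x. (inner_A LA (g x) (mu_star Gam x))\<^sup>2)"
    and int_sigma: "\<And>i. i < n \<Longrightarrow> integrable M (\<lambda>\<omega>.
        (g (X i \<omega>) (A i \<omega>))\<^sup>2 * (sqrt (sigma2 Gam (X i \<omega>) (A i \<omega>)))\<^sup>2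
          / (pol i (X i \<omega>) (hist X A Y i \<omega>) (A i \<omega>))\<^sup>2)"
    and int_err: "\<And>i. i < n \<Longrightarrow> integrable M (\<lambda>\<omega>.
        (g (X i \<omega>) (A i \<omega>))\<^sup>2
          * (muhat i (hist X A Y i \<omega>) (X i \<omega>) (A i \<omega>) - mu_star Gam (X i \<omega>) (A i \<omega>))\<^sup>2
          / (pol i (X i \<omega>) (hist X A Y i \<omega>) (A i \<omega>))\<^sup>2)"
  shows "(\<integral>\<omega>. (tau_aipw LA g pol muhat X A Y n \<omega> - tau Xi LA Gam g)\<^sup>2 \<partial>M)
    \<le> (1 / real n) * (v_star_sq M Xi LA Gam g pol X A Y n
        + (1 / real n) * (\<Sum>i<n. \<integral>\<omega>. (g (X i \<omega>) (A i \<omega>))\<^sup>2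
            * (muhat i (hist X A Y i \<omega>) (X i \<omega>) (A i \<omega>) - mu_star Gam (X i \<omega>) (A i \<omega>))\<^sup>2
            / (pol i (X i \<omega>) (hist X A Y i \<omega>) (A i \<omega>))\<^sup>2 \<partial>M))"
proof -
  interpret adaptive_aipw M LX LA Xi Gam g pol muhat X A Y n
    by (rule adaptive_aipw.intro) (fact assms)+
  show ?thesis
    by (rule aipw_mse_le)
qed

end
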